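(* Let $E$ be a graph and $k$ a field. If any two irreducible representations of $L_k(E)$ are algebraically equivalent, then $E$ has no cycles.
   Context: A graph $E=(E^0,E^1,r,s)$ has vertex set $E^0$, edge set $E^1$, range and source maps; no countability assumed. A vertex is regular if it emits a finite nonzero number of edges. A cycle is a path $e_1\cdots e_n$ ($n\ge1$, $r(e_i)=s(e_{i+1})$) with $s(e_1)=r(e_n)$. $L_k(E)$ is the universal $k$-algebra generated by pairwise orthogonal idempotents $p_v$ ($v\in E^0$) and elements $s_e,s_e^*$ ($e\in E^1$) with $p_{s(e)}s_e=s_e=s_ep_{r(e)}$, $p_{r(e)}s_e^*=s_e^*=s_e^*p_{s(e)}$, $s_e^*s_f=\delta_{e,f}p_{r(e)}$, and $p_v=\sum_{s(e)=v}s_es_e^*$ for each regular $v$. Representations $\rho_i:L_k(E)\to\mathrm{End}_k(V_i)$ are algebraically equivalent if $\rho_1(a)=T^{-1}\rho_2(a)T$ for all $a$ for some linear isomorphism $T:V_1\to V_2$; irreducible means the only invariant subspaces are $0$ and the whole space. *)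

theory Defs
  imports Main
begin

text \<open>
Graphs: vertex set E0 :: 'a set, edge set E1 :: 'b set, range r and source s.
No countability is assumed (the types 'a, 'b are arbitrary).
\<close>

definition graph :: "'a set \<Rightarrow> 'b set \<Rightarrow> ('b \<Rightarrow> 'a) \<Rightarrow> ('b \<Rightarrow> 'a) \<Rightarrow> bool" where
  "graph E0 E1 r s \<longleftrightarrow> r ` E1 \<subseteq> E0 \<and> s ` E1 \<subseteq> E0"

definition is_cycle :: "'b set \<Rightarrow> ('b \<Rightarrow> 'a) \<Rightarrow> ('b \<Rightarrow> 'a) \<Rightarrow> 'b list \<Rightarrow> bool" where
  "is_cycle E1 r s c \<longleftrightarrow> c \<noteq> [] \<and> set c \<subseteq> E1 \<and>
     (\<forall>i. Suc i < length c \<longrightarrow> r (c ! i) = s (c ! Suc i)) \<and> s (hd c) = r (last c)"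

definition has_cycle :: "'b set \<Rightarrow> ('b \<Rightarrow> 'a) \<Rightarrow> ('b \<Rightarrow> 'a) \<Rightarrow> bool" where
  "has_cycle E1 r s \<longleftrightarrow> (\<exists>c. is_cycle E1 r s c)"

definition regular_vertex :: "'b set \<Rightarrow> ('b \<Rightarrow> 'a) \<Rightarrow> 'a \<Rightarrow> bool" where
  "regular_vertex E1 s v \<longleftrightarrow> finite {e\<in>E1. s e = v} \<and> {e\<in>E1. s e = v} \<noteq> {}"

text \<open>
Ambient vector space: W = (('a + 'b) list => 'k) with pointwise operations over the field 'k.
Vector spaces on which L_k(E) is represented are k-subspaces V of W; by a cardinality
argument every representation space of an irreducible representation of
L_k(E) is isomorphic to such a subspace.
\<close>

definition subspace :: "('i \<Rightarrow> 'k::field) set \<Rightarrow> bool" where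
  "subspace V \<longleftrightarrow> (\<lambda>i. 0) \<in> V \<and> (\<forall>x\<in>V. \<forall>y\<in>V. (\<lambda>i. x i + y i) \<in> V)
     \<and> (\<forall>c. \<forall>x\<in>V. (\<lambda>i. c * x i) \<in> V)"

definition lin_on :: "('i \<Rightarrow> 'k::field) set \<Rightarrow> (('i \<Rightarrow> 'k) \<Rightarrow> ('j \<Rightarrow> 'k)) \<Rightarrow> bool" where
  "lin_on V f \<longleftrightarrow> (\<forall>x\<in>V. \<forall>y\<in>V. f (\<lambda>i. x i + y i) = (\<lambda>j. f x j + f y j))
     \<and> (\<forall>c. \<forall>x\<in>V. f (\<lambda>i. c * x i) = (\<lambda>j. c * f x j))"

definition eq_on :: "'v set \<Rightarrow> ('v \<Rightarrow> 'w) \<Rightarrow> ('v \<Rightarrow> 'w) \<Rightarrow> bool" where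
  "eq_on V f g \<longleftrightarrow> (\<forall>x\<in>V. f x = g x)"

type_synonym ('a,'b,'k) space = "('a + 'b) list \<Rightarrow> 'k"

text \<open>
Since L_k(E) is the universal k-algebra generated by
p_v, s_e, s_e^* subject to the stated relations, a representation
rho : L_k(E) -> End_k(V) is the same as an assignment of k-linear endomorphisms
P v = rho(p_v), S e = rho(s_e), St e = rho(s_e^* ) of V satisfying these relations.
\<close>
definition LPA_rep ::
  "'a set \<Rightarrow> 'b set \<Rightarrow> ('b \<Rightarrow> 'a) \<Rightarrow> ('b \<Rightarrow> 'a) \<Rightarrow> ('a,'b,'k::field) space set
   \<Rightarrow> ('a \<Rightarrow> ('a,'b,'k) space \<Rightarrow> ('a,'b,'k) space)
   \<Rightarrow> ('b \<Rightarrow> ('a,'b,'k) space \<Rightarrow> ('a,'b,'k) space)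
   \<Rightarrow> ('b \<Rightarrow> ('a,'b,'k) space \<Rightarrow> ('a,'b,'k) space) \<Rightarrow> bool" where
  "LPA_rep E0 E1 r s V P S St \<longleftrightarrow>
     subspace V \<and>
     (\<forall>v\<in>E0. lin_on V (P v) \<and> P v ` V \<subseteq> V) \<and>
     (\<forall>e\<in>E1. lin_on V (S e) \<and> S e ` V \<subseteq> V \<and> lin_on V (St e) \<and> St e ` V \<subseteq> V) \<and>
     (\<forall>v\<in>E0. \<forall>w\<in>E0. eq_on V (P v \<circ> P w) (if v = w then P v else (\<lambda>x i. 0))) \<and>
     (\<forall>e\<in>E1. eq_on V (P (s e) \<circ> S e) (S e) \<and> eq_on V (S e \<circ> P (r e)) (S e)) \<and>
     (\<forall>e\<in>E1. eq_on V (P (r e) \<circ> St e) (St e) \<and> eq_on V (St e \<circ> P (s e)) (St e)) \<and>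
     (\<forall>e\<in>E1. \<forall>f\<in>E1. eq_on V (St e \<circ> S f) (if e = f then P (r e) else (\<lambda>x i. 0))) \<and>
     (\<forall>v\<in>E0. regular_vertex E1 s v \<longrightarrow>
        eq_on V (P v) (\<lambda>x i. \<Sum>e\<in>{e\<in>E1. s e = v}. S e (St e x) i))"

text \<open>U is invariant under the representation, i.e. under all rho(a); since L_k(E) is generated
as an algebra by the p_v, s_e, s_e^*, this is invariance under the generators.\<close>
definition invariant ::
  "'a set \<Rightarrow> 'b set \<Rightarrow> ('v \<Rightarrow> 'k::field) set
   \<Rightarrow> ('a \<Rightarrow> ('v \<Rightarrow> 'k) \<Rightarrow> ('v \<Rightarrow> 'k)) \<Rightarrow> ('b \<Rightarrow> ('v \<Rightarrow> 'k) \<Rightarrow> ('v \<Rightarrow> 'k))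
   \<Rightarrow> ('b \<Rightarrow> ('v \<Rightarrow> 'k) \<Rightarrow> ('v \<Rightarrow> 'k)) \<Rightarrow> bool" where
  "invariant E0 E1 U P S St \<longleftrightarrow>
     (\<forall>v\<in>E0. P v ` U \<subseteq> U) \<and> (\<forall>e\<in>E1. S e ` U \<subseteq> U \<and> St e ` U \<subseteq> U)"

definition irreducible_rep where
  "irreducible_rep E0 E1 r s V P S St \<longleftrightarrow>
     LPA_rep E0 E1 r s V P S St \<and> V \<noteq> {\<lambda>i. 0} \<and>
     (\<exists>x\<in>V. (\<exists>v\<in>E0. P v x \<noteq> (\<lambda>i. 0)) \<or> (\<exists>e\<in>E1. S e x \<noteq> (\<lambda>i. 0) \<or> St e x \<noteq> (\<lambda>i. 0))) \<and>
     (\<forall>U. subspace U \<and> U \<subseteq> V \<and> invariant E0 E1 U P S St \<longrightarrow> U = {\<lambda>i. 0} \<or> U = V)"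

text \<open>Algebraic equivalence: rho1(a) = T^-1 rho2(a) T for a linear isomorphism T : V1 -> V2;
equivalently T rho1(g) = rho2(g) T on V1 for all generators g.\<close>
definition alg_equiv where
  "alg_equiv E0 E1 V1 P1 S1 St1 V2 P2 S2 St2 \<longleftrightarrow>
     (\<exists>T. bij_betw T V1 V2 \<and> lin_on V1 T \<and>
        (\<forall>v\<in>E0. \<forall>x\<in>V1. T (P1 v x) = P2 v (T x)) \<and>
        (\<forall>e\<in>E1. \<forall>x\<in>V1. T (S1 e x) = S2 e (T x) \<and> T (St1 e x) = St2 e (T x)))"

end

theory Submission
  imports Defs "HOL-Library.Stream" "HOL-Library.Nat_Bijection" "HOL-Library.Function_Algebras"
begin

text \<open>A cycle c yields the infinite periodic path p = c c c ..., of some minimal period d. For an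
  irreducible automorphism X of a vector space L, the twisted Chen module consists of
  the finitely supported L-valued functions on the paths tail-equivalent to p; s_e prepends e,
  s_e^* removes it, and X is applied whenever p itself is produced. This module is irreducible, and
  the cycle word s_(p_0) ... s_(p_(d-1)) fixes precisely the vectors supported at p with an X-fixed
  value. Taking X = 1 and a fixed-point free X (a scalar other than 0 and 1, or over GF(2) the
  companion matrix of x^2 + x + 1) gives two irreducible representations which no isomorphism can
  identify.\<close>

section \<open>Rational paths\<close>

definition inf_path :: "'b set \<Rightarrow> ('b \<Rightarrow> 'a) \<Rightarrow> ('b \<Rightarrow> 'a) \<Rightarrow> 'b stream \<Rightarrow> bool" where
  "inf_path E1 r s q \<longleftrightarrow> (\<forall>i. q !! i \<in> E1 \<and> r (q !! i) = s (q !! Suc i))"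

lemma inf_path_Stream [simp]:
  "inf_path E1 r s (e ## q) \<longleftrightarrow> e \<in> E1 \<and> r e = s (shd q) \<and> inf_path E1 r s q"
  unfolding inf_path_def
proof safe
  fix i assume "e \<in> E1" "r e = s (shd q)" "\<forall>i. q !! i \<in> E1 \<and> r (q !! i) = s (q !! Suc i)"
  then show "(e ## q) !! i \<in> E1" "r ((e ## q) !! i) = s ((e ## q) !! Suc i)"
    by (cases i; simp)+
qed (metis snth.simps stream.sel)+

lemma snth_cycle: "u \<noteq> [] \<Longrightarrow> cycle u !! n = u ! (n mod length u)"
proof (induction n rule: less_induct)
  case (less n)
  show ?case
  proof (cases "n < length u")
    case False
    have "n - length u < n" using False less.prems by (cases u) auto
    have "cycle u !! n = cycle u !! (n - length u)"
      using False by (subst cycle_decomp[OF less.prems]) simp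
    also have "\<dots> = u ! (n mod length u)"
      using False less.IH[OF \<open>n - length u < n\<close>] less.prems by (simp add: le_mod_geq)
    finally show ?thesis .
  qed (subst cycle_decomp[OF less.prems], simp)
qed

lemma stream_eqI_snth: "(\<And>n. s !! n = t !! n) \<Longrightarrow> s = t"
  using smap_alt[of id s t] by (simp add: stream.map_id)

lemma inf_path_cycle:
  assumes c: "is_cycle E1 r s c" shows "inf_path E1 r s (cycle c)"
  unfolding inf_path_def
proof
  fix i
  let ?n = "length c"
  have c_ne: "c \<noteq> []" and c_in: "set c \<subseteq> E1" and c_adj: "\<And>i. Suc i < ?n \<Longrightarrow> r (c ! i) = s (c ! Suc i)"
    and c_closed: "s (hd c) = r (last c)"
    using c by (auto simp: is_cycle_def)
  have "cycle c !! i \<in> E1" using c_ne c_in by (simp add: snth_cycle subset_code(1))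
  moreover have "r (c ! (i mod ?n)) = s (c ! (Suc i mod ?n))"
  proof (cases "Suc (i mod ?n) < ?n")
    case True
    then show ?thesis using c_adj by (simp add: mod_Suc)
  next
    case False
    moreover have "i mod ?n < ?n" using c_ne by simp
    ultimately have "i mod ?n = ?n - 1" "Suc i mod ?n = 0" by (simp_all add: mod_Suc)
    then show ?thesis using c_ne c_closed by (simp add: hd_conv_nth last_conv_nth)
  qed
  ultimately show "cycle c !! i \<in> E1 \<and> r (cycle c !! i) = s (cycle c !! Suc i)"
    unfolding snth_cycle[OF c_ne] by blast
qed

lemma map_Inr_replicate_Inl_eq_iff:
  "map Inr xs @ replicate k (Inl u) = map Inr ys @ replicate l (Inl u) \<longleftrightarrow> xs = ys \<and> k = l"
proof
  have decode: "map projr (filter (\<lambda>x. \<not> isl x) (map Inr zs @ replicate n (Inl u))) = zs \<and>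
      length (filter isl (map Inr zs @ replicate n (Inl u))) = n" for zs :: "'b list" and n
    by (induct zs) auto
  show "map Inr xs @ replicate k (Inl u) = map Inr ys @ replicate l (Inl u) \<Longrightarrow> xs = ys \<and> k = l"
    using decode[of xs k] decode[of ys l] by simp
qed simp

locale rational_path =
  fixes E1 :: "'b set" and r s :: "'b \<Rightarrow> 'a" and p :: "'b stream" and d :: nat
  assumes path: "inf_path E1 r s p"
    and period_pos: "0 < d" and period: "sdrop d p = p"
    and period_minimal: "\<And>j. 0 < j \<Longrightarrow> j < d \<Longrightarrow> sdrop j p \<noteq> p"

lemma cycle_rational_path:
  assumes c: "is_cycle E1 r s c" shows "\<exists>d. rational_path E1 r s (cycle c) d"
proof -
  define period where "period n \<longleftrightarrow> 0 < n \<and> sdrop n (cycle c) = cycle c" for n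
  have "c \<noteq> []" using c by (simp add: is_cycle_def)
  then have d: "period (Least period)"
    by (intro LeastI[of period "length c"]) (simp add: period_def)
  have minimal: "sdrop j (cycle c) \<noteq> cycle c" if "0 < j" "j < Least period" for j
  proof
    assume "sdrop j (cycle c) = cycle c"
    with \<open>0 < j\<close> have "period j" by (simp add: period_def)
    then show False using Least_le[of period j] \<open>j < Least period\<close> by simp
  qed
  show ?thesis
    using rational_path.intro[OF inf_path_cycle[OF c] _ _ minimal] d by (auto simp: period_def)
qed

context rational_path
begin

definition tail_class :: "'b stream set" where
  "tail_class = {q. inf_path E1 r s q \<and> (\<exists>n m. sdrop n q = sdrop m p)}"

lemma p_in_tail_class: "p \<in> tail_class"
  using path by (auto simp: tail_class_def)

lemma Stream_in_tail_class [simp]: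
  "e ## q \<in> tail_class \<longleftrightarrow> e \<in> E1 \<and> r e = s (shd q) \<and> q \<in> tail_class"
proof -
  have "(\<exists>n m. sdrop n (e ## q) = sdrop m p) \<longleftrightarrow> (\<exists>n m. sdrop n q = sdrop m p)"
  proof
    assume "\<exists>n m. sdrop n (e ## q) = sdrop m p"
    then obtain n m where "sdrop n (e ## q) = sdrop m p" by blast
    then have "stl (sdrop n (e ## q)) = stl (sdrop m p)" by simp
    then have "sdrop n q = sdrop (Suc m) p" by (simp flip: sdrop_stl)
    then show "\<exists>n m. sdrop n q = sdrop m p" by blast
  next
    assume "\<exists>n m. sdrop n q = sdrop m p"
    then obtain n m where "sdrop n q = sdrop m p" by blast
    then have "sdrop (Suc n) (e ## q) = sdrop m p" by simp
    then show "\<exists>n m. sdrop n (e ## q) = sdrop m p" by blast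
  qed
  then show ?thesis by (auto simp: tail_class_def)
qed

lemma stl_in_tail_class: "q \<in> tail_class \<Longrightarrow> stl q \<in> tail_class"
  using Stream_in_tail_class[of "shd q" "stl q"] by simp

lemma set_stake_p: "set (stake n p) \<subseteq> E1"
  using path by (auto simp: in_set_conv_nth inf_path_def)

lemma tail_class_head: "q \<in> tail_class \<Longrightarrow> shd q \<in> E1 \<and> r (shd q) = s (shd (stl q))"
  using Stream_in_tail_class[of "shd q" "stl q"] by simp

lemma tail_class_induct:
  assumes "a \<in> tail_class" "Pr a" "q \<in> tail_class"
    and stl: "\<And>q. q \<in> tail_class \<Longrightarrow> Pr q \<Longrightarrow> Pr (stl q)"
    and Stream: "\<And>e q. e ## q \<in> tail_class \<Longrightarrow> Pr q \<Longrightarrow> Pr (e ## q)"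
  shows "Pr q"
proof -
  have down: "Pr (sdrop n q)" if "q \<in> tail_class" "Pr q" for n q
    using that
  proof (induction n arbitrary: q)
    case (Suc n)
    then show ?case by (metis sdrop.simps(2) stl stl_in_tail_class)
  qed simp
  have up: "Pr q" if "q \<in> tail_class" "Pr (sdrop n q)" for n q
    using that
  proof (induction n arbitrary: q)
    case (Suc n)
    then have "Pr (stl q)" by (simp add: stl_in_tail_class)
    then show ?case using Stream[of "shd q" "stl q"] Suc.prems(1) by simp
  qed simp
  obtain n m where "sdrop n a = sdrop m p" using assms(1) by (auto simp: tail_class_def)
  then have "Pr p" using up[OF p_in_tail_class] down[OF assms(1,2)] by metis
  moreover obtain n' m' where "sdrop n' q = sdrop m' p" using assms(3) by (auto simp: tail_class_def)
  ultimately show "Pr q" using up[OF assms(3)] down[OF p_in_tail_class] by metis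
qed

definition tail_offset :: "'b stream \<Rightarrow> nat \<times> nat" where
  "tail_offset q = (SOME (n, m). sdrop n q = sdrop m p)"

lemma tail_offset_shift:
  assumes "q \<in> tail_class" "tail_offset q = (n, m)" shows "q = stake n q @- sdrop m p"
proof -
  have "\<exists>nm. case nm of (n, m) \<Rightarrow> sdrop n q = sdrop m p" using assms(1) by (auto simp: tail_class_def)
  then have "sdrop n q = sdrop m p"
    using someI_ex assms(2) unfolding tail_offset_def by (metis (mono_tags, lifting) case_prod_conv)
  then show ?thesis by (metis stake_sdrop)
qed

text \<open>The representation spaces of the statement are spaces of functions on lists over 'a + 'b.
  A point q of the tail class is recorded by a prefix of q and an offset into p, and the offset is
  paired with the coordinate index j.\<close>
definition path_code :: "'b stream \<times> nat \<Rightarrow> ('a + 'b) list" where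
  "path_code = (\<lambda>(q, j). case tail_offset q of (n, m) \<Rightarrow>
     map Inr (stake n q) @ replicate (prod_encode (m, j)) (Inl undefined))"

lemma inj_on_path_code: "inj_on path_code (tail_class \<times> UNIV)"
proof (rule inj_onI, clarify)
  fix q j q' j'
  assume q: "q \<in> tail_class" and q': "q' \<in> tail_class" and eq: "path_code (q, j) = path_code (q', j')"
  obtain n m n' m' where nm: "tail_offset q = (n, m)" and nm': "tail_offset q' = (n', m')"
    by (cases "tail_offset q", cases "tail_offset q'")
  from eq have "stake n q = stake n' q'" "m = m'" "j = j'"
    by (auto simp: path_code_def nm nm' map_Inr_replicate_Inl_eq_iff prod_encode_eq)
  then show "q = q' \<and> j = j'"
    using tail_offset_shift[OF q nm] tail_offset_shift[OF q' nm'] by metis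
qed

end

section \<open>Coordinates\<close>

definition supp :: "('q \<Rightarrow> 'v::zero) \<Rightarrow> 'q set" where
  "supp F = {q. F q \<noteq> 0}"

lemma supp_fun_upd_0: "supp (0(q := l)) \<subseteq> {q}"
  by (auto simp: supp_def)

locale coordinate_embedding =
  fixes I :: "'i set" and code :: "'i \<times> nat \<Rightarrow> 'c"
  assumes inj_code: "inj_on code (I \<times> UNIV)"
begin

definition embed :: "('i \<Rightarrow> nat \<Rightarrow> 'k::zero) \<Rightarrow> 'c \<Rightarrow> 'k" where
  "embed F c = (if c \<in> code ` (I \<times> UNIV) then case_prod F (inv_into (I \<times> UNIV) code c) else 0)"

definition coords :: "('c \<Rightarrow> 'k::zero) \<Rightarrow> 'i \<Rightarrow> nat \<Rightarrow> 'k" where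
  "coords x q j = (if q \<in> I then x (code (q, j)) else 0)"

lemma embed_code: "q \<in> I \<Longrightarrow> embed F (code (q, j)) = F q j"
  using inj_code by (simp add: embed_def)

lemma coords_embed: "supp F \<subseteq> I \<Longrightarrow> coords (embed F) = F"
  by (auto simp: fun_eq_iff coords_def embed_code supp_def)

lemma embed_inj:
  assumes "supp F \<subseteq> I" "supp G \<subseteq> I" "embed F = embed G" shows "F = G"
proof -
  have "F = coords (embed F)" using assms(1) by (simp add: coords_embed)
  also have "\<dots> = G" using assms(2,3) by (simp add: coords_embed)
  finally show ?thesis .
qed

lemma embed_zero [simp]: "embed 0 = (\<lambda>c. 0)"
  by (simp add: fun_eq_iff embed_def case_prod_beta)

lemma embed_add: "embed (F + G :: 'i \<Rightarrow> nat \<Rightarrow> 'k::monoid_add) = (\<lambda>c. embed F c + embed G c)"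
  by (simp add: fun_eq_iff embed_def case_prod_beta)

lemma embed_smult: "embed (\<lambda>q j. (a :: 'k::mult_zero) * F q j) = (\<lambda>c. a * embed F c)"
  by (simp add: fun_eq_iff embed_def case_prod_beta)

lemma embed_sum: "embed (\<lambda>q j. \<Sum>e\<in>A. G e q j) = (\<lambda>c. \<Sum>e\<in>A. embed (G e) c)"
  by (simp add: fun_eq_iff embed_def case_prod_beta)

lemma coords_add: "coords (\<lambda>c. x c + y c :: 'k::monoid_add) = coords x + coords y"
  by (simp add: fun_eq_iff coords_def)

lemma coords_smult: "coords (\<lambda>c. (a :: 'k::mult_zero) * x c) = (\<lambda>q j. a * coords x q j)"
  by (simp add: fun_eq_iff coords_def)

end

sublocale rational_path \<subseteq> coordinate_embedding tail_class path_code
  by unfold_locales (rule inj_on_path_code)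

section \<open>Twisted Chen modules\<close>

locale twisted_chen = rational_path E1 r s p d
  for E1 :: "'b set" and r s :: "'b \<Rightarrow> 'a" and p d +
  fixes L :: "(nat \<Rightarrow> 'k::field) set" and X Xi :: "(nat \<Rightarrow> 'k) \<Rightarrow> nat \<Rightarrow> 'k"
  assumes L_subspace: "subspace L"
    and X_lin: "lin_on L X" and Xi_lin: "lin_on L Xi"
    and X_in_L: "\<And>l. l \<in> L \<Longrightarrow> X l \<in> L" and Xi_in_L: "\<And>l. l \<in> L \<Longrightarrow> Xi l \<in> L"
    and X_Xi: "\<And>l. l \<in> L \<Longrightarrow> X (Xi l) = l" and Xi_X: "\<And>l. l \<in> L \<Longrightarrow> Xi (X l) = l"
    and X_irreducible: "\<And>U l. subspace U \<Longrightarrow> U \<subseteq> L \<Longrightarrow> (\<forall>x\<in>U. X x \<in> U) \<Longrightarrow>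
      l \<in> U \<Longrightarrow> l \<noteq> 0 \<Longrightarrow> L \<subseteq> U"
begin

lemma L_zero: "0 \<in> L"
  using L_subspace by (simp add: subspace_def zero_fun_def)

lemma L_add: "x \<in> L \<Longrightarrow> y \<in> L \<Longrightarrow> x + y \<in> L"
  using L_subspace by (simp add: subspace_def plus_fun_def)

lemma L_smult: "x \<in> L \<Longrightarrow> (\<lambda>i. c * x i) \<in> L"
  using L_subspace by (simp add: subspace_def)

definition twist :: "'b stream \<Rightarrow> (nat \<Rightarrow> 'k) \<Rightarrow> nat \<Rightarrow> 'k" where
  "twist q = (if q = p then X else id)"

definition untwist :: "'b stream \<Rightarrow> (nat \<Rightarrow> 'k) \<Rightarrow> nat \<Rightarrow> 'k" where
  "untwist q = (if q = p then Xi else id)"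

lemma twist_in_L: "l \<in> L \<Longrightarrow> twist q l \<in> L"
  by (simp add: twist_def X_in_L)

lemma untwist_in_L: "l \<in> L \<Longrightarrow> untwist q l \<in> L"
  by (simp add: untwist_def Xi_in_L)

lemma twist_untwist [simp]: "l \<in> L \<Longrightarrow> twist q (untwist q l) = l"
  by (simp add: twist_def untwist_def X_Xi)

lemma untwist_twist [simp]: "l \<in> L \<Longrightarrow> untwist q (twist q l) = l"
  by (simp add: twist_def untwist_def Xi_X)

lemma twist_add: "x \<in> L \<Longrightarrow> y \<in> L \<Longrightarrow> twist q (x + y) = twist q x + twist q y"
  using X_lin by (simp add: twist_def lin_on_def plus_fun_def)

lemma untwist_add: "x \<in> L \<Longrightarrow> y \<in> L \<Longrightarrow> untwist q (x + y) = untwist q x + untwist q y"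
  using Xi_lin by (simp add: untwist_def lin_on_def plus_fun_def)

lemma twist_smult: "x \<in> L \<Longrightarrow> twist q (\<lambda>i. c * x i) = (\<lambda>i. c * twist q x i)"
  using X_lin by (simp add: twist_def lin_on_def)

lemma untwist_smult: "x \<in> L \<Longrightarrow> untwist q (\<lambda>i. c * x i) = (\<lambda>i. c * untwist q x i)"
  using Xi_lin by (simp add: untwist_def lin_on_def)

lemma twist_zero [simp]: "twist q 0 = 0"
  using twist_smult[OF L_zero, of q 0] by (simp add: zero_fun_def)

lemma untwist_zero [simp]: "untwist q 0 = 0"
  using untwist_smult[OF L_zero, of q 0] by (simp add: zero_fun_def)

lemma twist_eq_0_iff:
  assumes "l \<in> L" shows "twist q l = 0 \<longleftrightarrow> l = 0"
proof
  assume "twist q l = 0"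
  then have "untwist q (twist q l) = 0" by simp
  then show "l = 0" using assms by simp
qed simp

lemma untwist_eq_0_iff:
  assumes "l \<in> L" shows "untwist q l = 0 \<longleftrightarrow> l = 0"
proof
  assume "untwist q l = 0"
  then have "twist q (untwist q l) = 0" by simp
  then show "l = 0" using assms by simp
qed simp

definition chen_space :: "('b stream \<Rightarrow> nat \<Rightarrow> 'k) set" where
  "chen_space = {F. finite (supp F) \<and> supp F \<subseteq> tail_class \<and> (\<forall>q. F q \<in> L)}"

definition chen_P :: "'a \<Rightarrow> ('b stream \<Rightarrow> nat \<Rightarrow> 'k) \<Rightarrow> 'b stream \<Rightarrow> nat \<Rightarrow> 'k" where
  "chen_P v F q = (if q \<in> tail_class \<and> s (shd q) = v then F q else 0)"

definition chen_S :: "'b \<Rightarrow> ('b stream \<Rightarrow> nat \<Rightarrow> 'k) \<Rightarrow> 'b stream \<Rightarrow> nat \<Rightarrow> 'k" where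
  "chen_S e F q = (if q \<in> tail_class \<and> shd q = e then twist q (F (stl q)) else 0)"

definition chen_St :: "'b \<Rightarrow> ('b stream \<Rightarrow> nat \<Rightarrow> 'k) \<Rightarrow> 'b stream \<Rightarrow> nat \<Rightarrow> 'k" where
  "chen_St e F q = (if e ## q \<in> tail_class then untwist (e ## q) (F (e ## q)) else 0)"

lemma chen_spaceD:
  assumes "F \<in> chen_space"
  shows "finite (supp F)" "q \<notin> tail_class \<Longrightarrow> F q = 0" "F q \<in> L"
  using assms by (auto simp: chen_space_def supp_def)

lemma chen_spaceI:
  "finite (supp F) \<Longrightarrow> (\<And>q. q \<notin> tail_class \<Longrightarrow> F q = 0) \<Longrightarrow> (\<And>q. F q \<in> L) \<Longrightarrow> F \<in> chen_space"
  by (auto simp: chen_space_def supp_def)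

lemma zero_in_chen_space: "0 \<in> chen_space"
  by (rule chen_spaceI) (simp_all add: supp_def L_zero)

lemma fun_upd_in_chen_space: "q \<in> tail_class \<Longrightarrow> l \<in> L \<Longrightarrow> 0(q := l) \<in> chen_space"
  by (rule chen_spaceI) (auto intro: finite_subset[OF supp_fun_upd_0] simp: L_zero)

lemma chen_space_add: "F \<in> chen_space \<Longrightarrow> G \<in> chen_space \<Longrightarrow> F + G \<in> chen_space"
proof (rule chen_spaceI)
  assume F: "F \<in> chen_space" and G: "G \<in> chen_space"
  have "supp (F + G) \<subseteq> supp F \<union> supp G" by (auto simp: supp_def)
  moreover have "finite (supp F \<union> supp G)" using chen_spaceD(1)[OF F] chen_spaceD(1)[OF G] by simp
  ultimately show "finite (supp (F + G))" by (rule finite_subset)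
  show "q \<notin> tail_class \<Longrightarrow> (F + G) q = 0" for q
    by (simp add: chen_spaceD(2)[OF F] chen_spaceD(2)[OF G])
  show "(F + G) q \<in> L" for q using chen_spaceD(3)[OF F] chen_spaceD(3)[OF G] by (simp add: L_add)
qed

lemma chen_space_smult: "F \<in> chen_space \<Longrightarrow> (\<lambda>q j. c * F q j) \<in> chen_space"
proof (rule chen_spaceI)
  assume F: "F \<in> chen_space"
  have "supp (\<lambda>q j. c * F q j) \<subseteq> supp F" by (auto simp: supp_def zero_fun_def)
  then show "finite (supp (\<lambda>q j. c * F q j))" using chen_spaceD(1)[OF F] by (rule finite_subset)
  show "q \<notin> tail_class \<Longrightarrow> (\<lambda>j. c * F q j) = 0" for q
    by (simp add: chen_spaceD(2)[OF F] zero_fun_def)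
  show "(\<lambda>j. c * F q j) \<in> L" for q using chen_spaceD(3)[OF F] by (rule L_smult)
qed

lemma chen_P_space:
  assumes F: "F \<in> chen_space" shows "chen_P v F \<in> chen_space"
proof (rule chen_spaceI)
  have "supp (chen_P v F) \<subseteq> supp F" by (auto simp: supp_def chen_P_def)
  then show "finite (supp (chen_P v F))" using chen_spaceD(1)[OF F] by (rule finite_subset)
qed (use F in \<open>auto simp: chen_P_def chen_spaceD(3) L_zero\<close>)

lemma chen_S_space:
  assumes F: "F \<in> chen_space" shows "chen_S e F \<in> chen_space"
proof (rule chen_spaceI)
  have "supp (chen_S e F) \<subseteq> (##) e ` supp F"
  proof
    fix q assume "q \<in> supp (chen_S e F)"
    then have "shd q = e" "F (stl q) \<noteq> 0" by (auto simp: supp_def chen_S_def split: if_splits)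
    then show "q \<in> (##) e ` supp F"
      using stream.collapse[of q] by (intro image_eqI[of _ _ "stl q"]) (auto simp: supp_def)
  qed
  then show "finite (supp (chen_S e F))" using chen_spaceD(1)[OF F] by (rule finite_subset[OF _ finite_imageI])
qed (use F in \<open>auto simp: chen_S_def chen_spaceD(3) twist_in_L L_zero\<close>)

lemma chen_St_space:
  assumes F: "F \<in> chen_space" shows "chen_St e F \<in> chen_space"
proof (rule chen_spaceI)
  have "supp (chen_St e F) \<subseteq> stl ` supp F"
  proof
    fix q assume "q \<in> supp (chen_St e F)"
    then have "F (e ## q) \<noteq> 0" by (auto simp: supp_def chen_St_def split: if_splits)
    then show "q \<in> stl ` supp F" by (intro image_eqI[of _ _ "e ## q"]) (auto simp: supp_def)
  qed
  then show "finite (supp (chen_St e F))" using chen_spaceD(1)[OF F] by (rule finite_subset[OF _ finite_imageI])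
qed (use F in \<open>auto simp: chen_St_def chen_spaceD(3) untwist_in_L L_zero\<close>)

lemma chen_P_P: "chen_P v (chen_P w F) = (if v = w then chen_P v F else 0)"
  by (auto simp: chen_P_def fun_eq_iff)

lemma chen_P_S: "chen_P (s e) (chen_S e F) = chen_S e F"
  by (auto simp: chen_P_def chen_S_def fun_eq_iff)

lemma chen_S_P: "chen_S e (chen_P (r e) F) = chen_S e F"
  by (auto simp: chen_P_def chen_S_def fun_eq_iff stl_in_tail_class tail_class_head)

lemma chen_P_St: "chen_P (r e) (chen_St e F) = chen_St e F"
  by (auto simp: chen_P_def chen_St_def fun_eq_iff)

lemma chen_St_P: "chen_St e (chen_P (s e) F) = chen_St e F"
  by (auto simp: chen_P_def chen_St_def fun_eq_iff)

lemma chen_St_S: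
  assumes "F \<in> chen_space" "e \<in> E1"
  shows "chen_St e (chen_S f F) = (if e = f then chen_P (r e) F else 0)"
  using assms by (auto simp: chen_P_def chen_St_def chen_S_def fun_eq_iff chen_spaceD(3))

lemma chen_S_St:
  assumes "F \<in> chen_space"
  shows "chen_S e (chen_St e F) q = (if q \<in> tail_class \<and> shd q = e then F q else 0)"
  using assms tail_class_head[of q] stl_in_tail_class[of q]
  by (auto simp: chen_St_def chen_S_def chen_spaceD(3))

lemma chen_P_eq_sum:
  assumes "F \<in> chen_space" "finite {e \<in> E1. s e = v}"
  shows "chen_P v F = (\<lambda>q j. \<Sum>e\<in>{e \<in> E1. s e = v}. chen_S e (chen_St e F) q j)"
proof (intro ext)
  fix q j
  have "(\<Sum>e\<in>{e \<in> E1. s e = v}. chen_S e (chen_St e F) q j)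
      = (\<Sum>e\<in>{e \<in> E1. s e = v}. if shd q = e then (if q \<in> tail_class then F q j else 0) else 0)"
    using assms(1) by (intro sum.cong) (auto simp: chen_S_St)
  also have "\<dots> = chen_P v F q j"
    using assms(2) tail_class_head[of q] by (auto simp: chen_P_def)
  finally show "chen_P v F q j = (\<Sum>e\<in>{e \<in> E1. s e = v}. chen_S e (chen_St e F) q j)" ..
qed

lemma chen_P_add: "chen_P v (F + G) = chen_P v F + chen_P v G"
  by (auto simp: chen_P_def fun_eq_iff)

lemma chen_S_add:
  "F \<in> chen_space \<Longrightarrow> G \<in> chen_space \<Longrightarrow> chen_S e (F + G) = chen_S e F + chen_S e G"
  by (auto simp: chen_S_def fun_eq_iff twist_add chen_spaceD(3))

lemma chen_St_add:
  "F \<in> chen_space \<Longrightarrow> G \<in> chen_space \<Longrightarrow> chen_St e (F + G) = chen_St e F + chen_St e G"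
  by (auto simp: chen_St_def fun_eq_iff untwist_add chen_spaceD(3))

lemma chen_P_smult: "chen_P v (\<lambda>q j. c * F q j) = (\<lambda>q j. c * chen_P v F q j)"
  by (auto simp: chen_P_def fun_eq_iff)

lemma chen_S_smult:
  "F \<in> chen_space \<Longrightarrow> chen_S e (\<lambda>q j. c * F q j) = (\<lambda>q j. c * chen_S e F q j)"
  by (auto simp: chen_S_def fun_eq_iff twist_smult chen_spaceD(3))

lemma chen_St_smult:
  "F \<in> chen_space \<Longrightarrow> chen_St e (\<lambda>q j. c * F q j) = (\<lambda>q j. c * chen_St e F q j)"
  by (auto simp: chen_St_def fun_eq_iff untwist_smult chen_spaceD(3))

lemma chen_S_fun_upd:
  assumes "e ## q \<in> tail_class"
  shows "chen_S e (0(q := l)) = 0(e ## q := twist (e ## q) l)"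
proof
  fix q'
  show "chen_S e (0(q := l)) q' = (0(e ## q := twist (e ## q) l)) q'"
  proof (cases "q' = e ## q")
    case False
    then have "\<not> (shd q' = e \<and> stl q' = q)" by (metis stream.collapse)
    then show ?thesis using False by (auto simp: chen_S_def)
  qed (use assms in \<open>simp add: chen_S_def\<close>)
qed

lemma chen_St_fun_upd:
  assumes "q \<in> tail_class"
  shows "chen_St (shd q) (0(q := l)) = 0(stl q := untwist q l)"
proof
  fix q'
  show "chen_St (shd q) (0(q := l)) q' = (0(stl q := untwist q l)) q'"
  proof (cases "q' = stl q")
    case False
    then have "shd q ## q' \<noteq> q" by (metis stream.sel(2))
    then show ?thesis using False by (auto simp: chen_St_def)
  qed (use assms in \<open>simp add: chen_St_def\<close>)
qed

subsection \<open>Irreducibility\<close>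

definition chen_invariant :: "('b stream \<Rightarrow> nat \<Rightarrow> 'k) set \<Rightarrow> bool" where
  "chen_invariant U \<longleftrightarrow> U \<subseteq> chen_space \<and> 0 \<in> U \<and> (\<forall>F\<in>U. \<forall>G\<in>U. F + G \<in> U) \<and>
     (\<forall>c. \<forall>F\<in>U. (\<lambda>q j. c * F q j) \<in> U) \<and> (\<forall>e\<in>E1. \<forall>F\<in>U. chen_S e F \<in> U \<and> chen_St e F \<in> U)"

lemma chen_invariantD:
  assumes "chen_invariant U"
  shows "U \<subseteq> chen_space" "0 \<in> U" "F \<in> U \<Longrightarrow> G \<in> U \<Longrightarrow> F + G \<in> U"
    "F \<in> U \<Longrightarrow> (\<lambda>q j. c * F q j) \<in> U"
    "e \<in> E1 \<Longrightarrow> F \<in> U \<Longrightarrow> chen_S e F \<in> U" "e \<in> E1 \<Longrightarrow> F \<in> U \<Longrightarrow> chen_St e F \<in> U"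
  using assms by (auto simp: chen_invariant_def)

lemma card_supp_chen_St:
  assumes "F \<in> chen_space" shows "card (supp (chen_St e F)) \<le> card (supp F)"
proof (rule card_inj_on_le)
  show "inj_on ((##) e) (supp (chen_St e F))" by (simp add: inj_on_def)
  show "(##) e ` supp (chen_St e F) \<subseteq> supp F" by (auto simp: supp_def chen_St_def)
qed (use assms in \<open>simp add: chen_spaceD(1)\<close>)

lemma chen_invariant_split_shd:
  assumes U: "chen_invariant U" and F: "F \<in> U" "q1 \<in> supp F" "q2 \<in> supp F" and "shd q1 \<noteq> shd q2"
  shows "\<exists>G\<in>U. supp G \<noteq> {} \<and> card (supp G) < card (supp F)"
proof -
  have F_space: "F \<in> chen_space" using F(1) chen_invariantD(1)[OF U] by blast
  then have "q1 \<in> tail_class" using F(2) chen_spaceD(2) by (auto simp: supp_def)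
  define G where "G = chen_S (shd q1) (chen_St (shd q1) F)"
  have "G \<in> U" unfolding G_def
    using \<open>q1 \<in> tail_class\<close> F(1) tail_class_head by (blast intro: chen_invariantD(5,6)[OF U])
  have G: "G q = (if q \<in> tail_class \<and> shd q = shd q1 then F q else 0)" for q
    unfolding G_def using F_space by (rule chen_S_St)
  have "q1 \<in> supp G" using F(2) \<open>q1 \<in> tail_class\<close> by (simp add: supp_def G)
  moreover have "supp G \<subset> supp F"
  proof
    show "supp G \<subseteq> supp F" by (auto simp: supp_def G)
    have "q2 \<notin> supp G" using \<open>shd q1 \<noteq> shd q2\<close> by (auto simp: supp_def G)
    then show "supp G \<noteq> supp F" using F(3) by blast
  qed
  then have "card (supp G) < card (supp F)"
    using chen_spaceD(1)[OF F_space] by (rule psubset_card_mono[rotated])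
  ultimately show ?thesis using \<open>G \<in> U\<close> by blast
qed

text \<open>Stripping the common prefix of q1 and q2 with chen_St and then projecting onto one head edge
  with chen_S e o chen_St e separates q1 from q2.\<close>
lemma chen_invariant_split:
  assumes U: "chen_invariant U"
  shows "F \<in> U \<Longrightarrow> q1 \<in> supp F \<Longrightarrow> q2 \<in> supp F \<Longrightarrow> q1 !! k \<noteq> q2 !! k \<Longrightarrow>
    \<exists>G\<in>U. supp G \<noteq> {} \<and> card (supp G) < card (supp F)"
proof (induction k arbitrary: F q1 q2)
  case 0
  then have "shd q1 \<noteq> shd q2" by simp
  then show ?case using chen_invariant_split_shd[OF U "0.prems"(1-3)] by blast
next
  case (Suc k)
  show ?case
  proof (cases "shd q1 = shd q2")
    case True
    have F_space: "F \<in> chen_space" using Suc.prems(1) chen_invariantD(1)[OF U] by blast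
    then have q: "q1 \<in> tail_class" "q2 \<in> tail_class"
      using Suc.prems(2,3) chen_spaceD(2) by (auto simp: supp_def)
    define G where "G = chen_St (shd q1) F"
    have "G \<in> U" unfolding G_def using q Suc.prems(1) tail_class_head by (blast intro: chen_invariantD(6)[OF U])
    have "G (stl q1) = untwist q1 (F q1)" using q(1) by (simp add: G_def chen_St_def)
    moreover have "G (stl q2) = untwist q2 (F q2)" using q(2) True by (simp add: G_def chen_St_def)
    ultimately have "stl q1 \<in> supp G" "stl q2 \<in> supp G"
      using Suc.prems(2,3) chen_spaceD(3)[OF F_space] by (simp_all add: supp_def untwist_eq_0_iff)
    moreover have "stl q1 !! k \<noteq> stl q2 !! k" using Suc.prems(4) by simp
    ultimately obtain H where "H \<in> U" "supp H \<noteq> {}" "card (supp H) < card (supp G)"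
      using Suc.IH[OF \<open>G \<in> U\<close>] by blast
    moreover have "card (supp G) \<le> card (supp F)" unfolding G_def using F_space by (rule card_supp_chen_St)
    ultimately show ?thesis by force
  qed (use chen_invariant_split_shd[OF U] Suc.prems in blast)
qed

lemma chen_invariant_contains_fun_upd:
  assumes U: "chen_invariant U"
  shows "F \<in> U \<Longrightarrow> supp F \<noteq> {} \<Longrightarrow> \<exists>q l. q \<in> tail_class \<and> l \<in> L \<and> l \<noteq> 0 \<and> 0(q := l) \<in> U"
proof (induction "card (supp F)" arbitrary: F rule: less_induct)
  case less
  have F_space: "F \<in> chen_space" using less.prems(1) chen_invariantD(1)[OF U] by blast
  obtain q1 where q1: "q1 \<in> supp F" using less.prems(2) by blast
  show ?case
  proof (cases "\<exists>q2\<in>supp F. q2 \<noteq> q1")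
    case True
    then obtain q2 k where "q2 \<in> supp F" "q1 !! k \<noteq> q2 !! k" using stream_eqI_snth by blast
    then obtain G where "G \<in> U" "supp G \<noteq> {}" "card (supp G) < card (supp F)"
      using chen_invariant_split[OF U less.prems(1) q1] by blast
    then show ?thesis using less.hyps by blast
  next
    case False
    then have "F = 0(q1 := F q1)" by (auto simp: fun_eq_iff supp_def)
    moreover have "q1 \<in> tail_class" "F q1 \<noteq> 0"
      using q1 F_space chen_spaceD(2) by (auto simp: supp_def)
    ultimately show ?thesis using less.prems(1) chen_spaceD(3)[OF F_space] by metis
  qed
qed

lemma foldr_chen_S_fun_upd:
  assumes "es @- q \<in> tail_class" "\<And>i. i < length es \<Longrightarrow> drop i es @- q \<noteq> p"
  shows "foldr chen_S es (0(q := l)) = 0(es @- q := l)"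
  using assms
proof (induction es)
  case (Cons e es)
  have "es @- q \<in> tail_class" using Cons.prems(1) by simp
  moreover have "drop i es @- q \<noteq> p" if "i < length es" for i
    using Cons.prems(2)[of "Suc i"] that by simp
  ultimately have "foldr chen_S es (0(q := l)) = 0(es @- q := l)" by (rule Cons.IH)
  moreover have "e ## (es @- q) \<noteq> p" using Cons.prems(2)[of 0] by simp
  ultimately show "foldr chen_S (e # es) (0(q := l)) = 0((e # es) @- q := l)"
    using Cons.prems(1) by (simp add: chen_S_fun_upd twist_def)
qed simp

definition chen_cycle :: "('b stream \<Rightarrow> nat \<Rightarrow> 'k) \<Rightarrow> 'b stream \<Rightarrow> nat \<Rightarrow> 'k" where
  "chen_cycle F = foldr chen_S (stake d p) F"

lemma chen_cycle_fun_upd: "chen_cycle (0(p := l)) = 0(p := X l)"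
proof -
  obtain n where d: "d = Suc n" using period_pos by (cases d) auto
  define es where "es = stake n (stl p)"
  have "sdrop n (stl p) = p" using period by (simp add: d)
  then have es_p: "es @- p = stl p" using stake_sdrop[of n "stl p"] by (simp add: es_def)
  have "drop i es @- p \<noteq> p" if "i < length es" for i
  proof -
    have "drop i es @- p = sdrop i (es @- p)" using sdrop_shift[of i es p] that by simp
    also have "\<dots> = sdrop (Suc i) p" by (simp add: es_p)
    finally show ?thesis using that period_minimal[of "Suc i"] by (simp add: es_def d)
  qed
  then have "foldr chen_S es (0(p := l)) = 0(stl p := l)"
    using foldr_chen_S_fun_upd[of es p] es_p stl_in_tail_class[OF p_in_tail_class] by simp
  moreover have "chen_S (shd p) (0(stl p := l)) = 0(p := X l)"
    using chen_S_fun_upd[of "shd p" "stl p" l] p_in_tail_class by (simp add: twist_def)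
  moreover have "stake d p = shd p # es" by (simp add: d es_def)
  ultimately show ?thesis unfolding chen_cycle_def by simp
qed

lemma chen_invariant_foldr_chen_S:
  "chen_invariant U \<Longrightarrow> set es \<subseteq> E1 \<Longrightarrow> F \<in> U \<Longrightarrow> foldr chen_S es F \<in> U"
  by (induction es) (auto intro: chen_invariantD(5))

lemma chen_invariant_fun_upd_at_p:
  assumes U: "chen_invariant U" and "q \<in> tail_class" "l \<in> L" "l \<noteq> 0" "0(q := l) \<in> U"
  shows "\<exists>l\<in>L. l \<noteq> 0 \<and> 0(p := l) \<in> U"
proof (rule tail_class_induct[where Pr="\<lambda>q. \<exists>l\<in>L. l \<noteq> 0 \<and> 0(q := l) \<in> U"])
  show "q \<in> tail_class" "p \<in> tail_class" "\<exists>l'\<in>L. l' \<noteq> 0 \<and> 0(q := l') \<in> U"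
    using assms(2-5) p_in_tail_class by blast+
next
  fix q assume q: "q \<in> tail_class" and "\<exists>l\<in>L. l \<noteq> 0 \<and> 0(q := l) \<in> U"
  then obtain l where l: "l \<in> L" "l \<noteq> 0" "0(q := l) \<in> U" by blast
  have "chen_St (shd q) (0(q := l)) \<in> U"
    using q l(3) tail_class_head by (blast intro: chen_invariantD(6)[OF U])
  then have "0(stl q := untwist q l) \<in> U" using q by (simp add: chen_St_fun_upd)
  then show "\<exists>l\<in>L. l \<noteq> 0 \<and> 0(stl q := l) \<in> U"
    using l untwist_in_L untwist_eq_0_iff by blast
next
  fix e q assume eq: "e ## q \<in> tail_class" and "\<exists>l\<in>L. l \<noteq> 0 \<and> 0(q := l) \<in> U"
  then obtain l where l: "l \<in> L" "l \<noteq> 0" "0(q := l) \<in> U" by blast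
  have "chen_S e (0(q := l)) \<in> U" using eq l(3) by (auto intro: chen_invariantD(5)[OF U])
  then have "0(e ## q := twist (e ## q) l) \<in> U" using eq by (simp add: chen_S_fun_upd)
  then show "\<exists>l\<in>L. l \<noteq> 0 \<and> 0(e ## q := l) \<in> U"
    using l twist_in_L twist_eq_0_iff by blast
qed

text \<open>The cycle word acts as X at p, so the values l with 0(p := l) in U form an X-invariant
  subspace of L.\<close>
lemma chen_invariant_all_fun_upd_at_p:
  assumes U: "chen_invariant U" and l0: "l0 \<in> L" "l0 \<noteq> 0" "0(p := l0) \<in> U" and "l \<in> L"
  shows "0(p := l) \<in> U"
proof -
  define UL where "UL = {l \<in> L. 0(p := l) \<in> U}"
  have "subspace UL" unfolding subspace_def
  proof (intro conjI ballI allI)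
    have "(0 :: 'b stream \<Rightarrow> nat \<Rightarrow> 'k)(p := 0) = 0" by (simp add: fun_eq_iff)
    then have "0 \<in> UL" using L_zero chen_invariantD(2)[OF U] by (simp add: UL_def)
    then show "(\<lambda>i. 0) \<in> UL" by (simp only: zero_fun_def)
  next
    fix x y assume "x \<in> UL" "y \<in> UL"
    moreover have "0(p := x + y) = 0(p := x) + 0(p := y)" by (simp add: fun_eq_iff)
    ultimately have "x + y \<in> UL" using L_add chen_invariantD(3)[OF U] by (simp add: UL_def)
    then show "(\<lambda>i. x i + y i) \<in> UL" by (simp only: plus_fun_def)
  next
    fix c x assume x: "x \<in> UL"
    have eq: "0(p := \<lambda>i. c * x i) = (\<lambda>q j. c * (0(p := x)) q j)" by (simp add: fun_eq_iff)
    have "(\<lambda>q j. c * (0(p := x)) q j) \<in> U" using x chen_invariantD(4)[OF U] unfolding UL_def by blast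
    then show "(\<lambda>i. c * x i) \<in> UL" using x L_smult unfolding UL_def mem_Collect_eq eq by blast
  qed
  moreover have "X x \<in> UL" if "x \<in> UL" for x
  proof -
    have "chen_cycle (0(p := x)) \<in> U"
      using that U set_stake_p unfolding chen_cycle_def UL_def by (blast intro: chen_invariant_foldr_chen_S)
    then show ?thesis using that X_in_L by (simp add: UL_def chen_cycle_fun_upd)
  qed
  ultimately have "L \<subseteq> UL" using X_irreducible[of UL l0] l0 by (auto simp: UL_def)
  then show ?thesis using \<open>l \<in> L\<close> by (auto simp: UL_def)
qed

lemma chen_invariant_all_fun_upd:
  assumes U: "chen_invariant U" and p: "\<And>l. l \<in> L \<Longrightarrow> 0(p := l) \<in> U" and "q \<in> tail_class" "l \<in> L"
  shows "0(q := l) \<in> U"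
proof -
  have "\<forall>l\<in>L. 0(q := l) \<in> U"
  proof (rule tail_class_induct[where Pr="\<lambda>q. \<forall>l\<in>L. 0(q := l) \<in> U"])
    show "p \<in> tail_class" "q \<in> tail_class" "\<forall>l\<in>L. 0(p := l) \<in> U"
      using p_in_tail_class \<open>q \<in> tail_class\<close> p by blast+
  next
    fix q assume q: "q \<in> tail_class" and all_q: "\<forall>l\<in>L. 0(q := l) \<in> U"
    show "\<forall>l\<in>L. 0(stl q := l) \<in> U"
    proof
      fix l assume "l \<in> L"
      then have "chen_St (shd q) (0(q := twist q l)) \<in> U"
        using q all_q tail_class_head twist_in_L by (blast intro: chen_invariantD(6)[OF U])
      then show "0(stl q := l) \<in> U" using q \<open>l \<in> L\<close> by (simp add: chen_St_fun_upd)
    qed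
  next
    fix e q assume eq: "e ## q \<in> tail_class" and all_q: "\<forall>l\<in>L. 0(q := l) \<in> U"
    show "\<forall>l\<in>L. 0(e ## q := l) \<in> U"
    proof
      fix l assume "l \<in> L"
      then have "chen_S e (0(q := untwist (e ## q) l)) \<in> U"
        using eq all_q untwist_in_L by (auto intro: chen_invariantD(5)[OF U])
      then show "0(e ## q := l) \<in> U" using eq \<open>l \<in> L\<close> by (simp add: chen_S_fun_upd)
    qed
  qed
  then show ?thesis using \<open>l \<in> L\<close> by blast
qed

lemma chen_space_subset_invariant:
  assumes U: "chen_invariant U" and fun_upd: "\<And>q l. q \<in> tail_class \<Longrightarrow> l \<in> L \<Longrightarrow> 0(q := l) \<in> U"
  shows "chen_space \<subseteq> U"
proof
  fix F assume "F \<in> chen_space"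
  then show "F \<in> U"
  proof (induction "card (supp F)" arbitrary: F rule: less_induct)
    case less
    show "F \<in> U"
    proof (cases "supp F = {}")
      case True
      then have "F = 0" by (auto simp: supp_def fun_eq_iff)
      then show ?thesis using chen_invariantD(2)[OF U] by simp
    next
      case False
      then obtain q where q: "q \<in> supp F" by blast
      have supp_F': "supp (F(q := 0)) = supp F - {q}" by (auto simp: supp_def)
      have "card (supp (F(q := 0))) < card (supp F)"
        unfolding supp_F' using chen_spaceD(1)[OF less.prems] q by (rule card_Diff1_less)
      moreover have "F(q := 0) \<in> chen_space"
        using less.prems by (auto simp: chen_space_def supp_F' L_zero)
      ultimately have "F(q := 0) \<in> U" by (rule less.hyps)
      moreover have "0(q := F q) \<in> U"
        using q fun_upd chen_spaceD[OF less.prems] by (auto simp: supp_def)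
      moreover have "F = F(q := 0) + 0(q := F q)" by (simp add: fun_eq_iff)
      ultimately show ?thesis using chen_invariantD(3)[OF U] by metis
    qed
  qed
qed

theorem chen_invariant_trivial:
  assumes U: "chen_invariant U" shows "U = {0} \<or> U = chen_space"
proof (cases "\<exists>F\<in>U. supp F \<noteq> {}")
  case True
  then obtain q l where "q \<in> tail_class" "l \<in> L" "l \<noteq> 0" "0(q := l) \<in> U"
    using chen_invariant_contains_fun_upd[OF U] by blast
  then obtain l0 where "l0 \<in> L" "l0 \<noteq> 0" "0(p := l0) \<in> U"
    using chen_invariant_fun_upd_at_p[OF U] by blast
  then have "0(p := l) \<in> U" if "l \<in> L" for l
    using chen_invariant_all_fun_upd_at_p[OF U _ _ _ that] by blast
  then have "0(q := l) \<in> U" if "q \<in> tail_class" "l \<in> L" for q l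
    using chen_invariant_all_fun_upd[OF U _ that] by blast
  then have "chen_space \<subseteq> U" by (rule chen_space_subset_invariant[OF U])
  then show ?thesis using chen_invariantD(1)[OF U] by blast
next
  case False
  then have "U \<subseteq> {0}" by (auto simp: supp_def fun_eq_iff)
  then show ?thesis using chen_invariantD(2)[OF U] by blast
qed

subsection \<open>Fixed vectors of the cycle word\<close>

lemma chen_S_neq_0: "chen_S e F q \<noteq> 0 \<Longrightarrow> q \<in> tail_class \<and> shd q = e \<and> F (stl q) \<noteq> 0"
  by (auto simp: chen_S_def split: if_splits)

lemma foldr_chen_S_supp:
  "q \<in> supp (foldr chen_S es G) \<Longrightarrow> stake (length es) q = es \<and> sdrop (length es) q \<in> supp G"
proof (induction es arbitrary: q)
  case (Cons e es)
  then have "shd q = e" "stl q \<in> supp (foldr chen_S es G)"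
    using chen_S_neq_0[of e "foldr chen_S es G" q] by (simp_all add: supp_def)
  with Cons.IH[of "stl q"] show "stake (length (e # es)) q = e # es \<and> sdrop (length (e # es)) q \<in> supp G"
    by simp
qed simp

lemma chen_cycle_fixed_eq_0:
  assumes F: "F \<in> chen_space" and fixed: "chen_cycle F = F" and X_fixed: "\<And>l. l \<in> L \<Longrightarrow> X l = l \<Longrightarrow> l = 0"
  shows "F = 0"
proof -
  have stake_eq: "stake (n * d) q = stake (n * d) p" if "q \<in> supp F" for n q
    using that
  proof (induction n arbitrary: q)
    case (Suc n)
    then have "stake d q = stake d p" "sdrop d q \<in> supp F"
      using foldr_chen_S_supp[of q "stake d p" F] fixed by (simp_all add: chen_cycle_def)
    then show "stake (Suc n * d) q = stake (Suc n * d) p"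
      using Suc.IH[of "sdrop d q"] stake_add[of d q "n * d"] stake_add[of d p "n * d"] period
      by (simp add: add.commute)
  qed simp
  then have supp_p: "q = p" if "q \<in> supp F" for q
  proof (intro stream_eqI_snth)
    fix i
    have "i < Suc i * d" using period_pos by (cases d) auto
    then show "q !! i = p !! i" using stake_eq[OF that, of "Suc i"] by (metis stake_nth)
  qed
  have F_p: "F = 0(p := F p)"
    using supp_p by (auto simp: fun_eq_iff supp_def)
  then have "0(p := X (F p)) = 0(p := F p)" using fixed chen_cycle_fun_upd by metis
  then have "X (F p) = F p" by (metis fun_upd_same)
  then have "F p = 0" using X_fixed chen_spaceD(3)[OF F] by blast
  with F_p show ?thesis by (simp add: fun_eq_iff)
qed

subsection \<open>The representation on the ambient space\<close>

definition V :: "('a, 'b, 'k) space set" where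
  "V = embed ` chen_space"

definition P :: "'a \<Rightarrow> ('a, 'b, 'k) space \<Rightarrow> ('a, 'b, 'k) space" where
  "P v x = embed (chen_P v (coords x))"

definition S :: "'b \<Rightarrow> ('a, 'b, 'k) space \<Rightarrow> ('a, 'b, 'k) space" where
  "S e x = embed (chen_S e (coords x))"

definition St :: "'b \<Rightarrow> ('a, 'b, 'k) space \<Rightarrow> ('a, 'b, 'k) space" where
  "St e x = embed (chen_St e (coords x))"

lemma supp_chen_space: "F \<in> chen_space \<Longrightarrow> supp F \<subseteq> tail_class"
  by (auto simp: chen_space_def)

lemma coords_embed_chen: "F \<in> chen_space \<Longrightarrow> coords (embed F) = F"
  by (simp add: coords_embed supp_chen_space)

lemma P_embed: "F \<in> chen_space \<Longrightarrow> P v (embed F) = embed (chen_P v F)"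
  by (simp add: P_def coords_embed_chen)

lemma S_embed: "F \<in> chen_space \<Longrightarrow> S e (embed F) = embed (chen_S e F)"
  by (simp add: S_def coords_embed_chen)

lemma St_embed: "F \<in> chen_space \<Longrightarrow> St e (embed F) = embed (chen_St e F)"
  by (simp add: St_def coords_embed_chen)

lemma subspace_V: "subspace V"
  unfolding subspace_def
proof (intro conjI ballI allI)
  have "embed 0 \<in> V" unfolding V_def using zero_in_chen_space by (rule imageI)
  then show "(\<lambda>i. 0) \<in> V" by simp
next
  fix x y assume "x \<in> V" "y \<in> V"
  then obtain F G where FG: "F \<in> chen_space" "G \<in> chen_space" "x = embed F" "y = embed G"
    by (auto simp: V_def)
  have "embed (F + G) \<in> V" unfolding V_def using chen_space_add[OF FG(1,2)] by (rule imageI)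
  then show "(\<lambda>i. x i + y i) \<in> V" using FG(3,4) by (simp add: embed_add)
next
  fix c x assume "x \<in> V"
  then obtain F where F: "F \<in> chen_space" "x = embed F" by (auto simp: V_def)
  have "embed (\<lambda>q j. c * F q j) \<in> V" unfolding V_def using chen_space_smult[OF F(1)] by (rule imageI)
  then show "(\<lambda>i. c * x i) \<in> V" using F(2) by (simp add: embed_smult)
qed

lemma lin_on_V:
  assumes add: "\<And>F G. F \<in> chen_space \<Longrightarrow> G \<in> chen_space \<Longrightarrow> op (F + G) = op F + op G"
    and smult: "\<And>c F. F \<in> chen_space \<Longrightarrow> op (\<lambda>q j. c * F q j) = (\<lambda>q j. c * op F q j)"
  shows "lin_on V (\<lambda>x. embed (op (coords x)))"
  unfolding lin_on_def
proof (intro conjI ballI allI)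
  fix x y assume "x \<in> V" "y \<in> V"
  then obtain F G where FG: "F \<in> chen_space" "G \<in> chen_space" "x = embed F" "y = embed G"
    by (auto simp: V_def)
  then have "coords (\<lambda>i. x i + y i) = F + G" by (simp add: coords_add coords_embed_chen)
  then show "embed (op (coords (\<lambda>i. x i + y i))) = (\<lambda>j. embed (op (coords x)) j + embed (op (coords y)) j)"
    using FG by (simp add: add coords_embed_chen embed_add)
next
  fix c x assume "x \<in> V"
  then obtain F where F: "F \<in> chen_space" "x = embed F" by (auto simp: V_def)
  then have "coords (\<lambda>i. c * x i) = (\<lambda>q j. c * F q j)" by (simp add: coords_smult coords_embed_chen)
  then show "embed (op (coords (\<lambda>i. c * x i))) = (\<lambda>j. c * embed (op (coords x)) j)"
    using F by (simp add: smult coords_embed_chen embed_smult)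
qed

lemma eq_on_V: "(\<And>F. F \<in> chen_space \<Longrightarrow> f (embed F) = g (embed F)) \<Longrightarrow> eq_on V f g"
  by (auto simp: eq_on_def V_def)

lemma image_subset_V: "(\<And>F. F \<in> chen_space \<Longrightarrow> op F \<in> chen_space) \<Longrightarrow>
    (\<lambda>x. embed (op (coords x))) ` V \<subseteq> V"
  by (auto simp: V_def coords_embed_chen)

lemma LPA_rep_chen: "LPA_rep E0 E1 r s V P S St"
  unfolding LPA_rep_def
proof (intro conjI ballI impI)
  show "subspace V" by (rule subspace_V)
next
  fix v
  show "lin_on V (P v)" unfolding P_def[abs_def] by (rule lin_on_V[OF chen_P_add chen_P_smult])
  show "P v ` V \<subseteq> V" unfolding P_def[abs_def] by (rule image_subset_V) (rule chen_P_space)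
next
  fix e
  show "lin_on V (S e)" unfolding S_def[abs_def] by (rule lin_on_V[OF chen_S_add chen_S_smult])
  show "lin_on V (St e)" unfolding St_def[abs_def] by (rule lin_on_V[OF chen_St_add chen_St_smult])
  show "S e ` V \<subseteq> V" unfolding S_def[abs_def] by (rule image_subset_V) (rule chen_S_space)
  show "St e ` V \<subseteq> V" unfolding St_def[abs_def] by (rule image_subset_V) (rule chen_St_space)
  show "eq_on V (P (s e) \<circ> S e) (S e)"
    by (rule eq_on_V) (simp add: P_embed S_embed chen_S_space chen_P_S)
  show "eq_on V (S e \<circ> P (r e)) (S e)"
    by (rule eq_on_V) (simp add: P_embed S_embed chen_P_space chen_S_P)
  show "eq_on V (P (r e) \<circ> St e) (St e)"
    by (rule eq_on_V) (simp add: P_embed St_embed chen_St_space chen_P_St)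
  show "eq_on V (St e \<circ> P (s e)) (St e)"
    by (rule eq_on_V) (simp add: P_embed St_embed chen_P_space chen_St_P)
next
  fix e f assume "e \<in> E1"
  then show "eq_on V (St e \<circ> S f) (if e = f then P (r e) else (\<lambda>x i. 0))"
    by (intro eq_on_V) (simp add: P_embed S_embed St_embed chen_S_space chen_St_S)
next
  fix v w
  show "eq_on V (P v \<circ> P w) (if v = w then P v else (\<lambda>x i. 0))"
    by (rule eq_on_V) (simp add: P_embed chen_P_space chen_P_P)
next
  fix v assume "regular_vertex E1 s v"
  then have "finite {e \<in> E1. s e = v}" by (simp add: regular_vertex_def)
  then show "eq_on V (P v) (\<lambda>x i. \<Sum>e\<in>{e \<in> E1. s e = v}. S e (St e x) i)"
    by (intro eq_on_V) (simp add: P_embed S_embed St_embed chen_St_space chen_P_eq_sum embed_sum)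
qed

lemma chen_invariant_preimage:
  assumes U: "subspace U" and inv: "invariant E0 E1 U P S St"
  shows "chen_invariant {F \<in> chen_space. embed F \<in> U}"
  unfolding chen_invariant_def
proof (intro conjI ballI allI)
  have "(\<lambda>i. 0) \<in> U" using U by (simp add: subspace_def)
  then show "0 \<in> {F \<in> chen_space. embed F \<in> U}" by (simp add: zero_in_chen_space)
next
  fix F G assume "F \<in> {F \<in> chen_space. embed F \<in> U}" "G \<in> {F \<in> chen_space. embed F \<in> U}"
  then show "F + G \<in> {F \<in> chen_space. embed F \<in> U}"
    using U by (simp add: subspace_def embed_add chen_space_add)
next
  fix c F assume "F \<in> {F \<in> chen_space. embed F \<in> U}"
  then show "(\<lambda>q j. c * F q j) \<in> {F \<in> chen_space. embed F \<in> U}"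
    using U by (simp add: subspace_def embed_smult chen_space_smult)
next
  fix e F assume "e \<in> E1" "F \<in> {F \<in> chen_space. embed F \<in> U}"
  then show "chen_S e F \<in> {F \<in> chen_space. embed F \<in> U}" "chen_St e F \<in> {F \<in> chen_space. embed F \<in> U}"
    using inv by (auto simp: invariant_def image_subset_iff chen_S_space chen_St_space simp flip: S_embed St_embed)
qed auto

lemma embed_fun_upd_neq_0:
  assumes "q \<in> tail_class" "l \<noteq> 0" shows "embed (0(q := l)) \<noteq> (\<lambda>c. 0)"
proof
  assume embed_0: "embed (0(q := l)) = (\<lambda>c. 0)"
  have "supp (0(q := l)) \<subseteq> tail_class" using assms(1) by (intro subset_trans[OF supp_fun_upd_0]) simp
  then have "0(q := l) = coords (embed (0(q := l)))" by (simp add: coords_embed)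
  also have "\<dots> = 0" unfolding embed_0 by (simp add: coords_def fun_eq_iff)
  finally show False using assms(2) by (auto simp: fun_eq_iff split: if_splits)
qed

theorem irreducible_rep_chen:
  assumes l: "l \<in> L" "l \<noteq> 0" shows "irreducible_rep E0 E1 r s V P S St"
  unfolding irreducible_rep_def
proof (intro conjI)
  define x where "x = embed (0(p := l))"
  have "x \<in> V" unfolding x_def V_def using fun_upd_in_chen_space[OF p_in_tail_class l(1)] by (rule imageI)
  moreover have "x \<noteq> (\<lambda>i. 0)" unfolding x_def using p_in_tail_class l(2) by (rule embed_fun_upd_neq_0)
  ultimately show "V \<noteq> {\<lambda>i. 0}" by blast
  have "St (shd p) x = embed (0(stl p := untwist p l))"
    using p_in_tail_class l(1) by (simp add: x_def St_embed fun_upd_in_chen_space chen_St_fun_upd)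
  moreover have "embed (0(stl p := untwist p l)) \<noteq> (\<lambda>i. 0)"
    using stl_in_tail_class[OF p_in_tail_class] l by (simp add: embed_fun_upd_neq_0 untwist_eq_0_iff)
  ultimately have "St (shd p) x \<noteq> (\<lambda>i. 0)" by simp
  then show "\<exists>x\<in>V. (\<exists>v\<in>E0. P v x \<noteq> (\<lambda>i. 0)) \<or> (\<exists>e\<in>E1. S e x \<noteq> (\<lambda>i. 0) \<or> St e x \<noteq> (\<lambda>i. 0))"
    using \<open>x \<in> V\<close> conjunct1[OF tail_class_head[OF p_in_tail_class]] by blast
next
  show "\<forall>U. subspace U \<and> U \<subseteq> V \<and> invariant E0 E1 U P S St \<longrightarrow> U = {\<lambda>i. 0} \<or> U = V"
  proof (intro allI impI)
    fix U assume U: "subspace U \<and> U \<subseteq> V \<and> invariant E0 E1 U P S St"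
    define W where "W = {F \<in> chen_space. embed F \<in> U}"
    have U_W: "U = embed ` W" using U by (auto simp: V_def W_def)
    from U have "W = {0} \<or> W = chen_space"
      unfolding W_def by (intro chen_invariant_trivial chen_invariant_preimage) auto
    then show "U = {\<lambda>i. 0} \<or> U = V" using U_W by (auto simp: V_def)
  qed
qed (rule LPA_rep_chen)

lemma foldr_S_embed:
  "F \<in> chen_space \<Longrightarrow> foldr S es (embed F) = embed (foldr chen_S es F) \<and> foldr chen_S es F \<in> chen_space"
  by (induction es) (simp_all add: S_embed chen_S_space)

lemma fixed_vector:
  assumes "l \<in> L" "l \<noteq> 0" "X l = l"
  shows "\<exists>x\<in>V. x \<noteq> (\<lambda>i. 0) \<and> foldr S (stake d p) x = x"
proof (intro bexI conjI)
  have F: "0(p := l) \<in> chen_space" using p_in_tail_class assms(1) by (rule fun_upd_in_chen_space)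
  then show "embed (0(p := l)) \<in> V" unfolding V_def by (rule imageI)
  show "embed (0(p := l)) \<noteq> (\<lambda>i. 0)" using p_in_tail_class assms(2) by (rule embed_fun_upd_neq_0)
  show "foldr S (stake d p) (embed (0(p := l))) = embed (0(p := l))"
    using foldr_S_embed[OF F] chen_cycle_fun_upd[of l] assms(3) by (simp add: chen_cycle_def)
qed

lemma no_fixed_vector:
  assumes X_fixed: "\<And>l. l \<in> L \<Longrightarrow> X l = l \<Longrightarrow> l = 0" and "x \<in> V" "foldr S (stake d p) x = x"
  shows "x = (\<lambda>i. 0)"
proof -
  obtain F where F: "F \<in> chen_space" "x = embed F" using assms(2) by (auto simp: V_def)
  then have "embed (chen_cycle F) = embed F"
    using foldr_S_embed[OF F(1)] assms(3) by (simp add: chen_cycle_def)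
  then have "chen_cycle F = F"
    using F(1) foldr_S_embed[OF F(1)] supp_chen_space by (intro embed_inj) (simp_all add: chen_cycle_def)
  then have "F = 0" using F(1) X_fixed by (intro chen_cycle_fixed_eq_0)
  then show ?thesis using F(2) by simp
qed

end

lemma alg_equiv_fixed_point:
  assumes equiv: "alg_equiv E0 E1 V1 P1 S1 St1 V2 P2 S2 St2"
    and rep: "LPA_rep E0 E1 r s V1 P1 S1 St1"
    and es: "set es \<subseteq> E1" and x: "x \<in> V1" "x \<noteq> (\<lambda>i. 0)" "foldr S1 es x = x"
  shows "\<exists>y\<in>V2. y \<noteq> (\<lambda>i. 0) \<and> foldr S2 es y = y"
proof -
  obtain T where T: "bij_betw T V1 V2" "lin_on V1 T" and T_S: "\<forall>e\<in>E1. \<forall>x\<in>V1. T (S1 e x) = S2 e (T x)"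
    using equiv unfolding alg_equiv_def by blast
  have V1: "subspace V1" and S1: "\<forall>e\<in>E1. S1 e ` V1 \<subseteq> V1" using rep by (auto simp: LPA_rep_def)
  have foldr: "T (foldr S1 es' x') = foldr S2 es' (T x') \<and> foldr S1 es' x' \<in> V1"
    if "set es' \<subseteq> E1" "x' \<in> V1" for es' x'
    using that
  proof (induction es')
    case (Cons e es')
    then have e: "e \<in> E1" and IH: "T (foldr S1 es' x') = foldr S2 es' (T x')" "foldr S1 es' x' \<in> V1"
      by simp_all
    then have "S1 e (foldr S1 es' x') \<in> V1" using S1 by blast
    moreover have "T (S1 e (foldr S1 es' x')) = S2 e (T (foldr S1 es' x'))" using T_S e IH(2) by blast
    ultimately show ?case using IH(1) by simp
  qed simp
  have "(\<lambda>i. 0) \<in> V1" using V1 by (simp add: subspace_def)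
  moreover have "T (\<lambda>i. 0 * x i) = (\<lambda>i. 0 * T x i)" using T(2) x(1) unfolding lin_on_def by blast
  then have "T (\<lambda>i. 0) = (\<lambda>i. 0)" by simp
  ultimately have "T x \<noteq> (\<lambda>i. 0)"
    using inj_onD[OF bij_betw_imp_inj_on[OF T(1)], of x "\<lambda>i. 0"] x(1,2) by auto
  moreover have "foldr S2 es (T x) = T x" using foldr[OF es x(1)] x(3) by simp
  moreover have "T x \<in> V2" using T(1) x(1) by (rule bij_betw_apply)
  ultimately show ?thesis by blast
qed

section \<open>Fixed-point free automorphisms\<close>

definition coord_space :: "nat \<Rightarrow> (nat \<Rightarrow> 'k::zero) set" where
  "coord_space n = {l. \<forall>j\<ge>n. l j = 0}"

lemma twisted_chen_scalar:
  fixes a :: "'k::field"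
  assumes "rational_path E1 r s p d" "a \<noteq> 0"
  shows "twisted_chen E1 r s p d (coord_space 1) (\<lambda>l i. a * l i) (\<lambda>l i. inverse a * l i)"
proof (rule twisted_chen.intro[OF assms(1)], unfold_locales)
  fix U and x :: "nat \<Rightarrow> 'k"
  assume U: "subspace U" "U \<subseteq> coord_space 1" and x: "x \<in> U" "x \<noteq> 0"
  have x_j: "x j = 0" if "j \<noteq> 0" for j using x(1) U(2) that by (auto simp: coord_space_def)
  have "x 0 \<noteq> 0"
  proof
    assume "x 0 = 0"
    then have "x j = 0" for j using x_j by (cases j) auto
    then show False using x(2) by (simp add: fun_eq_iff)
  qed
  show "coord_space 1 \<subseteq> U"
  proof
    fix l :: "nat \<Rightarrow> 'k" assume l: "l \<in> coord_space 1"
    have "(\<lambda>i. (l 0 / x 0) * x i) \<in> U" using U(1) x(1) unfolding subspace_def by blast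
    moreover have "(\<lambda>i. (l 0 / x 0) * x i) = l"
    proof
      fix i show "l 0 / x 0 * x i = l i"
        using \<open>x 0 \<noteq> 0\<close> x_j l by (cases i) (auto simp: coord_space_def)
    qed
    ultimately show "l \<in> U" by simp
  qed
qed (use assms(2) in \<open>simp_all add: subspace_def lin_on_def coord_space_def fun_eq_iff algebra_simps\<close>)

text \<open>The companion matrix of x^2 + x + 1, which is irreducible over GF(2); its cube is the identity.\<close>
definition companion3 :: "(nat \<Rightarrow> 'k::field) \<Rightarrow> nat \<Rightarrow> 'k" where
  "companion3 l = (\<lambda>j. if j = 0 then l 1 else if j = 1 then l 0 + l 1 else 0)"

lemma GF2_add_self:
  assumes GF2: "\<And>x::'k::field. x = 0 \<or> x = 1" shows "(x::'k) + x = 0"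
proof -
  have "(1::'k) + 1 \<noteq> 1" by (simp only: add_cancel_left_right) simp
  then have "(1::'k) + 1 = 0" using GF2 by blast
  then have "x * (1 + 1) = 0" by simp
  then show ?thesis by (simp add: algebra_simps)
qed

lemma companion3_orbit:
  assumes GF2: "\<And>x::'k::field. x = 0 \<or> x = 1" and x: "x \<in> coord_space 2" "x \<noteq> (0 :: nat \<Rightarrow> 'k)"
  shows "(\<lambda>j. if j = 0 then 1 else 0) \<in> {x, companion3 x, companion3 (companion3 x)}"
proof -
  have x_j: "x j = 0" if "j \<noteq> 0" "j \<noteq> 1" for j using x(1) that by (auto simp: coord_space_def)
  have "x 0 \<noteq> 0 \<or> x 1 \<noteq> 0"
  proof (rule ccontr)
    assume "\<not> (x 0 \<noteq> 0 \<or> x 1 \<noteq> 0)"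
    then have "x j = 0" for j using x_j by (cases "j = 0"; cases "j = 1") auto
    then show False using x(2) by (simp add: fun_eq_iff)
  qed
  then consider "x 0 = 1" "x 1 = 0" | "x 0 = 0" "x 1 = 1" | "x 0 = 1" "x 1 = 1" using GF2 by metis
  then show ?thesis
  proof cases
    case 1
    then have "x = (\<lambda>j. if j = 0 then 1 else 0)" using x_j by (auto simp: fun_eq_iff)
    then show ?thesis by simp
  next
    case 2
    then have "companion3 (companion3 x) = (\<lambda>j. if j = 0 then 1 else 0)"
      using GF2_add_self[OF GF2] by (auto simp: fun_eq_iff companion3_def)
    then show ?thesis by simp
  next
    case 3
    then have "companion3 x = (\<lambda>j. if j = 0 then 1 else 0)"
      using GF2_add_self[OF GF2] by (auto simp: fun_eq_iff companion3_def)
    then show ?thesis by simp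
  qed
qed

lemma twisted_chen_GF2:
  assumes "rational_path E1 r s p d" and GF2: "\<And>x::'k::field. x = 0 \<or> x = 1"
  shows "twisted_chen E1 r s p d (coord_space 2) (companion3 :: (nat \<Rightarrow> 'k) \<Rightarrow> nat \<Rightarrow> 'k)
    (\<lambda>l. companion3 (companion3 l))"
proof (rule twisted_chen.intro[OF assms(1)], unfold_locales)
  fix U and x :: "nat \<Rightarrow> 'k"
  assume U: "subspace U" "U \<subseteq> coord_space 2" "\<forall>x\<in>U. companion3 x \<in> U" and x: "x \<in> U" "x \<noteq> 0"
  define e0 :: "nat \<Rightarrow> 'k" where "e0 = (\<lambda>j. if j = 0 then 1 else 0)"
  define e1 where "e1 = companion3 e0"
  have "e0 \<in> {x, companion3 x, companion3 (companion3 x)}"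
    unfolding e0_def using x U(2) by (intro companion3_orbit[OF GF2]) auto
  then have "e0 \<in> U" using x(1) U(3) by blast
  then have "e1 \<in> U" using U(3) by (simp add: e1_def)
  show "coord_space 2 \<subseteq> U"
  proof
    fix l :: "nat \<Rightarrow> 'k" assume l: "l \<in> coord_space 2"
    have add: "\<And>x y. x \<in> U \<Longrightarrow> y \<in> U \<Longrightarrow> (\<lambda>i. x i + y i) \<in> U"
      and smult: "\<And>c x. x \<in> U \<Longrightarrow> (\<lambda>i. c * x i) \<in> U"
      using U(1) by (simp_all add: subspace_def)
    have "(\<lambda>i. l 0 * e0 i + l 1 * e1 i) \<in> U"
      using add[OF smult[OF \<open>e0 \<in> U\<close>] smult[OF \<open>e1 \<in> U\<close>]] by simp
    moreover have "(\<lambda>i. l 0 * e0 i + l 1 * e1 i) = l"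
    proof
      fix i show "l 0 * e0 i + l 1 * e1 i = l i"
        using l by (cases "i = 0"; cases "i = 1") (auto simp: e0_def e1_def companion3_def coord_space_def)
    qed
    ultimately show "l \<in> U" by simp
  qed
qed (simp_all add: subspace_def lin_on_def coord_space_def companion3_def fun_eq_iff algebra_simps
    GF2_add_self[OF GF2, of 1, unfolded one_add_one])

lemma exists_fixed_point_free_twisted_chen:
  assumes "rational_path E1 r s p d"
  obtains L and X Xi :: "(nat \<Rightarrow> 'k::field) \<Rightarrow> nat \<Rightarrow> 'k" and l
  where "twisted_chen E1 r s p d L X Xi" "l \<in> L" "l \<noteq> 0" "\<And>l. l \<in> L \<Longrightarrow> X l = l \<Longrightarrow> l = 0"
proof -
  define e0 :: "nat \<Rightarrow> 'k" where "e0 = (\<lambda>j. if j = 0 then 1 else 0)"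
  have "e0 \<noteq> 0" by (simp add: e0_def fun_eq_iff exI[of _ 0])
  show ?thesis
  proof (cases "\<exists>a::'k. a \<noteq> 0 \<and> a \<noteq> 1")
    case True
    then obtain a :: 'k where a: "a \<noteq> 0" "a \<noteq> 1" by blast
    have "l = 0" if "(\<lambda>i. a * l i) = l" for l :: "nat \<Rightarrow> 'k"
    proof
      fix i
      have "(a - 1) * l i = 0" using fun_cong[OF that, of i] by (simp add: algebra_simps)
      then show "l i = 0 i" using a(2) by simp
    qed
    moreover have "e0 \<in> coord_space 1" by (simp add: e0_def coord_space_def)
    ultimately show ?thesis using that[OF twisted_chen_scalar[OF assms a(1)]] \<open>e0 \<noteq> 0\<close> by blast
  next
    case False
    then have GF2: "\<And>x::'k. x = 0 \<or> x = 1" by blast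
    have "l = 0" if "l \<in> coord_space 2" "companion3 l = l" for l :: "nat \<Rightarrow> 'k"
    proof -
      have "l 1 = l 0" "l 0 + l 1 = l 1" using fun_cong[OF that(2), of 0] fun_cong[OF that(2), of 1]
        by (simp_all add: companion3_def)
      then have "l 0 = 0" "l 1 = 0" by (simp_all only: add_cancel_left_left)
      then have "l j = 0" for j using that(1) by (cases "j = 0"; cases "j = 1") (auto simp: coord_space_def)
      then show "l = 0" by (simp add: fun_eq_iff)
    qed
    moreover have "e0 \<in> coord_space 2" by (simp add: e0_def coord_space_def)
    ultimately show ?thesis using that[OF twisted_chen_GF2[OF assms GF2]] \<open>e0 \<noteq> 0\<close> by blast
  qed
qed

theorem lemma4p5:
  fixes E0 :: "'a set" and E1 :: "'b set" and r s :: "'b \<Rightarrow> 'a"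
  assumes "graph E0 E1 r s"
    and "\<forall>(V1 :: ('a,'b,'k::field) space set) P1 S1 St1 V2 P2 S2 St2.
           irreducible_rep E0 E1 r s V1 P1 S1 St1 \<and> irreducible_rep E0 E1 r s V2 P2 S2 St2
           \<longrightarrow> alg_equiv E0 E1 V1 P1 S1 St1 V2 P2 S2 St2"
  shows "\<not> has_cycle E1 r s"
proof
  assume "has_cycle E1 r s"
  then obtain c where "is_cycle E1 r s c" by (auto simp: has_cycle_def)
  then obtain d where path: "rational_path E1 r s (cycle c) d" using cycle_rational_path by blast
  define e0 :: "nat \<Rightarrow> 'k" where "e0 = (\<lambda>j. if j = 0 then 1 else 0)"
  have e0: "e0 \<in> coord_space 1" "e0 \<noteq> 0" by (auto simp: e0_def coord_space_def fun_eq_iff)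
  interpret A: twisted_chen E1 r s "cycle c" d "coord_space 1" "\<lambda>l i. (1 :: 'k) * l i" "\<lambda>l i. inverse 1 * l i"
    using twisted_chen_scalar[OF path one_neq_zero] .
  obtain L and X Xi :: "(nat \<Rightarrow> 'k) \<Rightarrow> nat \<Rightarrow> 'k" and l
    where B: "twisted_chen E1 r s (cycle c) d L X Xi" "l \<in> L" "l \<noteq> 0" "\<And>l. l \<in> L \<Longrightarrow> X l = l \<Longrightarrow> l = 0"
    using exists_fixed_point_free_twisted_chen[OF path] by blast
  interpret B: twisted_chen E1 r s "cycle c" d L X Xi by (fact B(1))
  have equiv: "alg_equiv E0 E1 A.V A.P A.S A.St B.V B.P B.S B.St"
    using assms(2) A.irreducible_rep_chen[OF e0] B.irreducible_rep_chen[OF B(2,3)] by blast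
  have "\<exists>x\<in>A.V. x \<noteq> (\<lambda>i. 0) \<and> foldr A.S (stake d (cycle c)) x = x"
    using A.fixed_vector[OF e0] by simp
  then obtain y where "y \<in> B.V" "y \<noteq> (\<lambda>i. 0)" "foldr B.S (stake d (cycle c)) y = y"
    using alg_equiv_fixed_point[OF equiv A.LPA_rep_chen A.set_stake_p] by blast
  then show False using B.no_fixed_vector[OF B(4)] by blast
qed

end
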